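(* Let $L$ be a finite lattice, $\varphi\in M_1(L)$, and let $G$ be a tree whose vertex set is a nonempty subset of $L$. Then $\varphi(G)\le B_\varphi(\langle G\rangle^* )$, where $$\varphi(G)=\sum_{a\in G}\varphi(a)-\sum_{\{a,b\}\in E(G)}\varphi(a\vee b).$$
   Context: $L$ is a finite lattice with join $\vee$ and meet $\wedge$. A tree is a connected acyclic graph; $G$ also denotes its vertex set and $E(G)$ its edge set (unordered pairs of vertices). For $A\subseteq L$, $\langle A\rangle^*=\{x\in L: x\ge a\text{ for some }a\in A\}$. $\mathcal L$ is the set of nonempty up-sets of $L$, ordered by $U\preceq V$ iff $U\supseteq V$ (meet = union). $M_1(L)$ is the set of nonnegative monotone functions on $L$; $M_\infty(\mathcal L)$ is the set of nonnegative completely monotone functions on $(\mathcal L,\preceq)$ (all iterated differences $\nabla_{U}\Phi(W)=\Phi(W)-\Phi(W\wedge U)$ nonnegative). For $\varphi\in M_1(L)$ and $U\in\mathcal L$, $B_\varphi(U)=\min\{\Phi(U):\Phi\in M_\infty(\mathcal L),\ \Phi(\langle x\rangle^* )=\varphi(x)\ \forall x\in L\}$. *)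

theory Defs
  imports Complex_Main
begin

definition up_closure :: "'a::order set \<Rightarrow> 'a set" where
  "up_closure A = {x. \<exists>a\<in>A. a \<le> x}"

text \<open>Nonempty up-sets of L (the carrier of the lattice \<open>\<L>\<close>, ordered by reverse inclusion).\<close>
definition upsets :: "'a::order set set" where
  "upsets = {U. U \<noteq> {} \<and> (\<forall>x y. x \<in> U \<and> x \<le> y \<longrightarrow> y \<in> U)}"

definition M1 :: "('a::order \<Rightarrow> real) set" where
  "M1 = {\<phi>. mono \<phi> \<and> (\<forall>x. 0 \<le> \<phi> x)}"

text \<open>Iterated differences: nabla [U1,...,Uk] \<Phi> W = \<nabla>_{U1} ... \<nabla>_{Uk} \<Phi>(W),
  with \<nabla>_U \<Phi>(W) = \<Phi>(W) - \<Phi>(W \<and> U) and meet in \<L> being union.\<close>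
fun nabla :: "'a set list \<Rightarrow> ('a set \<Rightarrow> real) \<Rightarrow> 'a set \<Rightarrow> real" where
  "nabla [] \<Phi> W = \<Phi> W"
| "nabla (U # Us) \<Phi> W = nabla Us \<Phi> W - nabla Us \<Phi> (W \<union> U)"

text \<open>M_\<infinity>(\<L>): nonnegative completely monotone functions on \<L>
  (only their values on \<L> matter).\<close>
definition Minf :: "('a::order set \<Rightarrow> real) set" where
  "Minf = {\<Phi>. \<forall>Us W. set Us \<subseteq> upsets \<and> W \<in> upsets \<longrightarrow> 0 \<le> nabla Us \<Phi> W}"

text \<open>B_\<phi>(U) = min of \<Phi>(U) over completely monotone extensions of \<phi>;
  rendered as the infimum (which is the minimum when attained).\<close>
definition B :: "('a::order \<Rightarrow> real) \<Rightarrow> 'a set \<Rightarrow> real" where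
  "B \<phi> U = Inf {\<Phi> U | \<Phi>. \<Phi> \<in> Minf \<and> (\<forall>x. \<Phi> (up_closure {x}) = \<phi> x)}"

definition simple_graph :: "'a set \<Rightarrow> 'a set set \<Rightarrow> bool" where
  "simple_graph V E \<longleftrightarrow> finite V \<and> (\<forall>e\<in>E. \<exists>a b. a \<in> V \<and> b \<in> V \<and> a \<noteq> b \<and> e = {a, b})"

definition adj :: "'a set set \<Rightarrow> 'a \<Rightarrow> 'a \<Rightarrow> bool" where
  "adj E a b \<longleftrightarrow> {a, b} \<in> E"

definition connected_graph :: "'a set \<Rightarrow> 'a set set \<Rightarrow> bool" where
  "connected_graph V E \<longleftrightarrow> (\<forall>a\<in>V. \<forall>b\<in>V. (adj E)\<^sup>*\<^sup>* a b)"

definition is_cycle :: "'a set set \<Rightarrow> 'a list \<Rightarrow> bool" where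
  "is_cycle E vs \<longleftrightarrow> length vs \<ge> 3 \<and> distinct vs
     \<and> (\<forall>i. Suc i < length vs \<longrightarrow> adj E (vs ! i) (vs ! Suc i))
     \<and> adj E (last vs) (hd vs)"

definition acyclic_graph :: "'a set set \<Rightarrow> bool" where
  "acyclic_graph E \<longleftrightarrow> \<not> (\<exists>vs. is_cycle E vs)"

definition is_tree :: "'a set \<Rightarrow> 'a set set \<Rightarrow> bool" where
  "is_tree V E \<longleftrightarrow> simple_graph V E \<and> connected_graph V E \<and> acyclic_graph E"

text \<open>\<phi>(G) = \<Sum>_{a\<in>G} \<phi>(a) - \<Sum>_{{a,b}\<in>E(G)} \<phi>(a \<squnion> b); for e = {a,b}, Sup_fin e = a \<squnion> b.\<close>
definition phiG :: "('a::lattice \<Rightarrow> real) \<Rightarrow> 'a set \<Rightarrow> 'a set set \<Rightarrow> real" where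
  "phiG \<phi> V E = (\<Sum>a\<in>V. \<phi> a) - (\<Sum>e\<in>E. \<phi> (Sup_fin e))"

end

theory Submission
  imports Defs
begin

text \<open>Grow a spanning tree of \<open>G\<close> from a single vertex, one leaf at a time. Adding the leaf \<open>b\<close>
  along the edge \<open>{a, b}\<close> changes \<open>\<phi>(S)\<close> by \<open>\<phi>(b) - \<phi>(a \<squnion> b)\<close>, while for every completely
  monotone extension \<open>\<Phi>\<close> of \<open>\<phi>\<close> supermodularity and monotonicity of \<open>\<Phi>\<close> give
  \<open>\<Phi>(\<langle>S\<rangle>\<^sup>*) + \<phi>(b) \<le> \<Phi>(\<langle>S \<union> {b}\<rangle>\<^sup>*) + \<Phi>(\<langle>S\<rangle>\<^sup>* \<inter> \<langle>b\<rangle>\<^sup>*) \<le> \<Phi>(\<langle>S \<union> {b}\<rangle>\<^sup>*) + \<phi>(a \<squnion> b)\<close>.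
  Hence \<open>\<phi>(G) \<le> \<Phi>(\<langle>G\<rangle>\<^sup>*)\<close> for every such \<open>\<Phi>\<close>, and \<open>\<Phi>(W) = min (max \<phi>) (min \<phi> on W)\<close> shows
  that such extensions exist, so the infimum \<open>B\<^sub>\<phi>\<close> is bounded below as well.\<close>

lemma up_closure_in_upsets: "A \<noteq> {} \<Longrightarrow> up_closure A \<in> upsets"
  unfolding up_closure_def upsets_def by (auto intro: order_trans)

lemma upsets_Int: "U \<in> upsets \<Longrightarrow> W \<in> upsets \<Longrightarrow> U \<inter> W \<noteq> {} \<Longrightarrow> U \<inter> W \<in> upsets"
  unfolding upsets_def by blast

lemma up_closure_insert: "up_closure (insert b S) = up_closure S \<union> up_closure {b}"
  unfolding up_closure_def by auto

lemma Minf_antimono: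
  assumes "\<Phi> \<in> Minf" "X \<in> upsets" "Y \<in> upsets" "Y \<subseteq> X"
  shows "\<Phi> X \<le> \<Phi> Y"
proof -
  have "set [X] \<subseteq> upsets" using assms(2) by simp
  then have "0 \<le> nabla [X] \<Phi> Y" using assms(1,3) unfolding Minf_def by blast
  moreover have "nabla [X] \<Phi> Y = \<Phi> Y - \<Phi> X" using \<open>Y \<subseteq> X\<close> by (simp add: Un_absorb1)
  ultimately show ?thesis by simp
qed

lemma Minf_supermodular:
  assumes "\<Phi> \<in> Minf" "U \<in> upsets" "W \<in> upsets" "U \<inter> W \<in> upsets"
  shows "\<Phi> U + \<Phi> W \<le> \<Phi> (U \<union> W) + \<Phi> (U \<inter> W)"
proof -
  have "set [U, W] \<subseteq> upsets" using assms(2,3) by simp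
  then have "0 \<le> nabla [U, W] \<Phi> (U \<inter> W)" using assms(1,4) unfolding Minf_def by blast
  moreover have "U \<inter> W \<union> W = W" "U \<inter> W \<union> U = U" "U \<inter> W \<union> U \<union> W = U \<union> W" by auto
  then have "nabla [U, W] \<Phi> (U \<inter> W) = (\<Phi> (U \<inter> W) - \<Phi> W) - (\<Phi> U - \<Phi> (U \<union> W))"
    by (simp only: nabla.simps)
  ultimately show ?thesis by simp
qed

lemma nabla_min_hom:
  assumes min_hom: "\<And>W U. \<Phi> (W \<union> U) = min (\<Phi> W) (\<Phi> U)"
  shows "nabla Us \<Phi> W = (if Us = [] then \<Phi> W else max 0 (\<Phi> W - Max (\<Phi> ` set Us)))"
proof (induction Us arbitrary: W)
  case Nil
  then show ?case by simp
next
  case (Cons U Us)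
  show ?case
  proof (cases "Us = []")
    case True
    then show ?thesis using min_hom[of W U] by (simp add: max_def min_def)
  next
    case False
    define m where "m = Max (\<Phi> ` set Us)"
    have "nabla Us \<Phi> W = max 0 (\<Phi> W - m)"
      and "nabla Us \<Phi> (W \<union> U) = max 0 (min (\<Phi> W) (\<Phi> U) - m)"
      and "Max (\<Phi> ` set (U # Us)) = max (\<Phi> U) m"
      using Cons False min_hom by (simp_all add: m_def)
    then show ?thesis by (simp add: max_def min_def)
  qed
qed

text \<open>The cap \<open>M\<close> keeps \<open>Min\<close> away from the empty set, so that \<open>\<Phi>\<close> turns every union into a minimum.\<close>
lemma M1_has_Minf_extension:
  fixes \<phi> :: "'a::{finite, order} \<Rightarrow> real"
  assumes "\<phi> \<in> M1"
  shows "\<exists>\<Phi>. \<Phi> \<in> Minf \<and> (\<forall>x. \<Phi> (up_closure {x}) = \<phi> x)"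
proof -
  have mono: "mono \<phi>" and nonneg: "\<And>x. 0 \<le> \<phi> x" using assms by (auto simp: M1_def)
  define M where "M = Max (range \<phi>)"
  have le_M: "\<phi> x \<le> M" for x unfolding M_def by (rule Max_ge) auto
  define \<Phi> where "\<Phi> W = Min (insert M (\<phi> ` W))" for W
  have min_hom: "\<Phi> (W \<union> U) = min (\<Phi> W) (\<Phi> U)" for W U
  proof -
    have "insert M (\<phi> ` (W \<union> U)) = insert M (\<phi> ` W) \<union> insert M (\<phi> ` U)" by auto
    moreover have "Min (insert M (\<phi> ` W) \<union> insert M (\<phi> ` U))
        = min (Min (insert M (\<phi> ` W))) (Min (insert M (\<phi> ` U)))"
      by (rule Min_Un) auto
    ultimately show ?thesis unfolding \<Phi>_def by simp
  qed
  have Phi_nonneg: "0 \<le> \<Phi> W" for W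
    unfolding \<Phi>_def using nonneg le_M[of undefined] by (auto intro: order_trans)
  have "0 \<le> nabla Us \<Phi> W" for Us W
    using nabla_min_hom[of \<Phi>, OF min_hom, of Us W] Phi_nonneg[of W] by simp
  then have "\<Phi> \<in> Minf" unfolding Minf_def by blast
  moreover have "\<Phi> (up_closure {x}) = \<phi> x" for x
  proof -
    have "Min (insert M (\<phi> ` {y. x \<le> y})) = \<phi> x"
      by (rule Min_eqI) (auto simp: le_M intro: monoD[OF mono])
    then show ?thesis unfolding \<Phi>_def up_closure_def by simp
  qed
  ultimately show ?thesis by blast
qed

lemma le_B_if_le_Minf_extensions:
  fixes \<phi> :: "'a::{finite, order} \<Rightarrow> real"
  assumes "\<phi> \<in> M1"
    and "\<And>\<Phi>. \<Phi> \<in> Minf \<Longrightarrow> \<forall>x. \<Phi> (up_closure {x}) = \<phi> x \<Longrightarrow> c \<le> \<Phi> U"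
  shows "c \<le> B \<phi> U"
  unfolding B_def
proof (rule cInf_greatest)
  show "{\<Phi> U |\<Phi>. \<Phi> \<in> Minf \<and> (\<forall>x. \<Phi> (up_closure {x}) = \<phi> x)} \<noteq> {}"
    using M1_has_Minf_extension[OF assms(1)] by blast
qed (use assms(2) in blast)

lemma Minf_extension_add_leaf:
  fixes a b :: "'a::lattice"
  assumes "\<Phi> \<in> Minf" "\<forall>x. \<Phi> (up_closure {x}) = \<phi> x" "a \<in> S"
  shows "\<Phi> (up_closure S) + \<phi> b \<le> \<Phi> (up_closure (insert b S)) + \<phi> (sup a b)"
proof -
  let ?U = "up_closure S" and ?W = "up_closure {b}"
  have sup_in: "up_closure {sup a b} \<subseteq> ?U \<inter> ?W"
  proof
    fix x assume "x \<in> up_closure {sup a b}"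
    then have "a \<le> x" "b \<le> x" by (simp_all add: up_closure_def)
    then show "x \<in> ?U \<inter> ?W" using \<open>a \<in> S\<close> unfolding up_closure_def by blast
  qed
  have "sup a b \<in> up_closure {sup a b}" by (simp add: up_closure_def)
  then have "?U \<inter> ?W \<noteq> {}" using sup_in by blast
  have U: "?U \<in> upsets" and W: "?W \<in> upsets"
    using \<open>a \<in> S\<close> by (auto intro: up_closure_in_upsets)
  moreover have UW: "?U \<inter> ?W \<in> upsets"
    using upsets_Int[OF U W \<open>?U \<inter> ?W \<noteq> {}\<close>] .
  ultimately have "\<Phi> ?U + \<Phi> ?W \<le> \<Phi> (?U \<union> ?W) + \<Phi> (?U \<inter> ?W)"
    by (rule Minf_supermodular[OF assms(1)])
  moreover have "\<Phi> (?U \<inter> ?W) \<le> \<Phi> (up_closure {sup a b})"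
    using Minf_antimono[OF assms(1) UW up_closure_in_upsets sup_in] by simp
  ultimately show ?thesis using assms(2) up_closure_insert[of b S] by simp
qed

lemma phiG_add_leaf:
  fixes a b :: "'a::lattice"
  assumes "finite S" "finite F" "b \<notin> S" "\<forall>e\<in>F. e \<subseteq> S"
  shows "phiG \<phi> (insert b S) (insert {a, b} F) = phiG \<phi> S F + \<phi> b - \<phi> (sup a b)"
proof -
  have "{a, b} \<notin> F" using assms(3,4) by auto
  then show ?thesis using assms(1-3) unfolding phiG_def by simp
qed

lemma phiG_antimono_edges:
  assumes "\<phi> \<in> M1" "finite E" "F \<subseteq> E"
  shows "phiG \<phi> V E \<le> phiG \<phi> V F"
proof -
  have "(\<Sum>e\<in>F. \<phi> (Sup_fin e)) \<le> (\<Sum>e\<in>E. \<phi> (Sup_fin e))"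
    using assms by (intro sum_mono2) (auto simp: M1_def)
  then show ?thesis unfolding phiG_def by simp
qed

lemma simple_graph_finite_edges: "simple_graph V E \<Longrightarrow> finite E"
  unfolding simple_graph_def by (auto intro: finite_subset[of _ "Pow V"])

lemma connected_graph_leaving_edge:
  assumes "simple_graph V E" "connected_graph V E" "x \<in> S" "S \<subseteq> V" "S \<noteq> V"
  obtains a b where "{a, b} \<in> E" "a \<in> S" "b \<in> V - S"
proof -
  obtain z where z: "z \<in> V" "z \<notin> S" using assms(4,5) by blast
  have "(adj E)\<^sup>*\<^sup>* x z" using assms(2-4) z(1) unfolding connected_graph_def by blast
  then obtain a b where ab: "{a, b} \<in> E" "a \<in> S" "b \<notin> S"
    using \<open>x \<in> S\<close> \<open>z \<notin> S\<close> by (induction rule: rtranclp_induct) (auto simp: adj_def)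
  moreover have "b \<in> V"
    using ab(1) assms(1) unfolding simple_graph_def by (auto simp: doubleton_eq_iff)
  ultimately show thesis using that by blast
qed

lemma connected_graph_spanning_bound:
  assumes "\<Phi> \<in> Minf" "\<forall>x. \<Phi> (up_closure {x}) = \<phi> x"
    and G: "simple_graph V E" "connected_graph V E"
    and "S \<subseteq> V" "S \<noteq> {}" "F \<subseteq> E" "\<forall>e\<in>F. e \<subseteq> S" "phiG \<phi> S F \<le> \<Phi> (up_closure S)"
  shows "\<exists>F\<subseteq>E. phiG \<phi> V F \<le> \<Phi> (up_closure V)"
  using assms(5-)
proof (induction "card (V - S)" arbitrary: S F rule: less_induct)
  case less
  show ?case
  proof (cases "S = V")
    case True
    then show ?thesis using less.prems by blast
  next
    case False
    obtain x where "x \<in> S" using less.prems(2) by blast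
    with G obtain a b where ab: "{a, b} \<in> E" "a \<in> S" "b \<in> V - S"
      using less.prems(1) False by (rule connected_graph_leaving_edge)
    have fin: "finite V" "finite E"
      using G(1) simple_graph_finite_edges by (auto simp: simple_graph_def)
    have "phiG \<phi> (insert b S) (insert {a, b} F) = phiG \<phi> S F + \<phi> b - \<phi> (sup a b)"
      using ab less.prems fin by (intro phiG_add_leaf) (auto intro: finite_subset)
    also have "\<dots> \<le> \<Phi> (up_closure (insert b S))"
      using Minf_extension_add_leaf[OF assms(1,2) ab(2), of b] less.prems(5) by linarith
    finally have "phiG \<phi> (insert b S) (insert {a, b} F) \<le> \<Phi> (up_closure (insert b S))" .
    moreover have "card (V - insert b S) < card (V - S)"
      using ab(3) fin(1) by (intro psubset_card_mono) auto
    ultimately show ?thesis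
      using less.hyps[of "insert b S" "insert {a, b} F"] less.prems ab by auto
  qed
qed

theorem lemma3p9:
  fixes \<phi> :: "'a::{finite, lattice} \<Rightarrow> real"
    and V :: "'a set" and E :: "'a set set"
  assumes "\<phi> \<in> M1"
    and "V \<noteq> {}"
    and "is_tree V E"
  shows "phiG \<phi> V E \<le> B \<phi> (up_closure V)"
proof (rule le_B_if_le_Minf_extensions[OF assms(1)])
  fix \<Phi> assume \<Phi>: "\<Phi> \<in> Minf" "\<forall>x. \<Phi> (up_closure {x}) = \<phi> x"
  obtain r where r: "r \<in> V" using assms(2) by blast
  have G: "simple_graph V E" "connected_graph V E" using assms(3) by (auto simp: is_tree_def)
  have "phiG \<phi> {r} {} \<le> \<Phi> (up_closure {r})" using \<Phi>(2) by (simp add: phiG_def)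
  then obtain F where "F \<subseteq> E" "phiG \<phi> V F \<le> \<Phi> (up_closure V)"
    using connected_graph_spanning_bound[OF \<Phi> G, of "{r}" "{}"] r by auto
  moreover have "phiG \<phi> V E \<le> phiG \<phi> V F"
    using phiG_antimono_edges[OF assms(1) simple_graph_finite_edges[OF G(1)] \<open>F \<subseteq> E\<close>] .
  ultimately show "phiG \<phi> V E \<le> \<Phi> (up_closure V)" by linarith
qed

end
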